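(* Let $M=(E,r)$ be a polymatroid, fix a total order on $E$, and let $t\ge0$ be an integer. For each base $f$ of $M$ let $A(f)\subseteq E$ be the set of elements internally active with respect to $f$. Then the sets $\big(f+t\nabla_{A(f)}\big)\cap\mathbb Z^E$, for $f$ ranging over the bases of $M$, are pairwise disjoint and their union is $(P(M)+t\nabla)\cap\mathbb Z^E$. Here $f+t\nabla_{A(f)}$ has dimension $|A(f)|-1=|E|-1-\bar\iota(f)$, where $\bar\iota(f)=|E\setminus A(f)|$.
   Context: A polymatroid $M=(E,r)$ is a function $r:2^E\to\mathbb Z_{\ge0}$ with $r(\emptyset)=0$, $r$ monotone, and $r(X\cup Y)+r(X\cap Y)\le r(X)+r(Y)$. Its bases are the $\mathbf x\in\mathbb Z^E$ with $\sum_{i\in E}x_i=r(E)$ and $\sum_{i\in S}x_i\le r(S)$ for all $S$; $P(M)$ is their convex hull. For nonempty $S\subseteq E$, $\nabla_S=\operatorname{conv}\{-\mathbf e_i:i\in S\}$ and $\nabla=\nabla_E$. A transfer from $u_1$ to $u_2$ is possible in a base $f$ if $f-\mathbf e_{u_1}+\mathbf e_{u_2}$ is again a base. An element $u$ is internally active with respect to $f$ if no transfer is possible in $f$ from $u$ to a smaller element of $E$ (in particular, the smallest element and every $u$ with $f_u=0$ are internally active). *)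

theory Defs
  imports "HOL-Analysis.Analysis"
begin

text \<open>Ground set E is the finite type 'a (E = UNIV), totally ordered by its linorder.
  Integer points of Z^E are int ^ 'a, real points are real ^ 'a.\<close>

definition polymatroid :: "('a::finite set \<Rightarrow> int) \<Rightarrow> bool" where
  "polymatroid r \<longleftrightarrow> r {} = 0 \<and> (\<forall>X. 0 \<le> r X) \<and> (\<forall>X Y. X \<subseteq> Y \<longrightarrow> r X \<le> r Y)
     \<and> (\<forall>X Y. r (X \<union> Y) + r (X \<inter> Y) \<le> r X + r Y)"

definition is_base :: "('a::finite set \<Rightarrow> int) \<Rightarrow> int ^ 'a \<Rightarrow> bool" where
  "is_base r x \<longleftrightarrow> (\<Sum>i\<in>UNIV. x $ i) = r UNIV \<and> (\<forall>S. (\<Sum>i\<in>S. x $ i) \<le> r S)"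

definition real_vec :: "int ^ 'a \<Rightarrow> real ^ 'a" where
  "real_vec x = (\<chi> i. real_of_int (x $ i))"

definition base_polytope :: "('a::finite set \<Rightarrow> int) \<Rightarrow> (real ^ 'a) set" where
  "base_polytope r = convex hull (real_vec ` {x. is_base r x})"

definition nabla :: "'a::finite set \<Rightarrow> (real ^ 'a) set" where
  "nabla S = convex hull ((\<lambda>i. - axis i 1) ` S)"

definition transfer_possible :: "('a::finite set \<Rightarrow> int) \<Rightarrow> int ^ 'a \<Rightarrow> 'a \<Rightarrow> 'a \<Rightarrow> bool" where
  "transfer_possible r f u1 u2 \<longleftrightarrow> is_base r (f - axis u1 1 + axis u2 1)"

definition internally_active :: "('a set \<Rightarrow> int) \<Rightarrow> int ^ ('a::{finite,linorder}) \<Rightarrow> 'a \<Rightarrow> bool" where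
  "internally_active r f u \<longleftrightarrow> \<not> (\<exists>v. v < u \<and> transfer_possible r f u v)"

definition active_set :: "('a set \<Rightarrow> int) \<Rightarrow> int ^ ('a::{finite,linorder}) \<Rightarrow> 'a set" where
  "active_set r f = {u. internally_active r f u}"

end

theory Submission
  imports Defs
begin

text \<open>
  An integer point x lies in
  P(M) + t\<nabla> iff x(S) \<le> r(S) for all S and x(E) = r(E) - t, and it lies in the cell of the
  base f iff f \<ge> x and f exceeds x only at elements internally active for f. Such an f
  exists: x lies below some base, since the sets tight for a feasible vector are closed under
  union and intersection; among the bases above x take one maximising a potential that rewards
  mass on small elements, so that no unit can be transferred from a decreased element to a
  smaller one. It is unique: if g and f are two such bases and m is the first coordinate where
  they differ, say g(m) < f(m), the exchange property yields v with f(v) < g(v) such that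
  g - e(v) + e(m) is a base. Then v > m and x(v) < g(v), so v is not internally active for g.
\<close>

definition submodular :: "('a set \<Rightarrow> int) \<Rightarrow> bool" where
  "submodular r \<longleftrightarrow> (\<forall>X Y. r (X \<union> Y) + r (X \<inter> Y) \<le> r X + r Y)"

lemma polymatroid_imp_submodular: "polymatroid r \<Longrightarrow> submodular r"
  by (simp add: polymatroid_def submodular_def)

definition rank_bounded :: "('a::finite set \<Rightarrow> int) \<Rightarrow> int ^ 'a \<Rightarrow> bool" where
  "rank_bounded r y \<longleftrightarrow> (\<forall>S. (\<Sum>i\<in>S. y $ i) \<le> r S)"

definition tight :: "('a::finite set \<Rightarrow> int) \<Rightarrow> int ^ 'a \<Rightarrow> 'a set \<Rightarrow> bool" where
  "tight r y S \<longleftrightarrow> (\<Sum>i\<in>S. y $ i) = r S"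

lemma is_base_iff_tight: "is_base r f \<longleftrightarrow> rank_bounded r f \<and> tight r f UNIV"
  by (auto simp: is_base_def rank_bounded_def tight_def)

lemma tight_Un_Int:
  assumes "submodular r" "rank_bounded r y" "tight r y A" "tight r y B"
  shows "tight r y (A \<union> B) \<and> tight r y (A \<inter> B)"
proof -
  have "(\<Sum>i\<in>A \<union> B. y $ i) + (\<Sum>i\<in>A \<inter> B. y $ i) = (\<Sum>i\<in>A. y $ i) + (\<Sum>i\<in>B. y $ i)"
    by (rule sum.union_inter) auto
  moreover have "(\<Sum>i\<in>A \<union> B. y $ i) \<le> r (A \<union> B)" "(\<Sum>i\<in>A \<inter> B. y $ i) \<le> r (A \<inter> B)"
    using assms(2) by (auto simp: rank_bounded_def)
  moreover have "r (A \<union> B) + r (A \<inter> B) \<le> r A + r B"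
    using assms(1) by (simp add: submodular_def)
  ultimately show ?thesis
    using assms(3,4) unfolding tight_def by linarith
qed

lemma tight_Inter_Union:
  assumes "submodular r" "rank_bounded r y" "finite \<F>" "\<F> \<noteq> {}" "\<forall>S\<in>\<F>. tight r y S"
  shows "tight r y (\<Inter>\<F>) \<and> tight r y (\<Union>\<F>)"
  using assms(3-5)
  by (induction \<F> rule: finite_ne_induct) (simp_all add: tight_Un_Int[OF assms(1,2)])

lemma sum_mult_axis: "(\<Sum>j\<in>S. c j * axis u (1::'b::comm_ring_1) $ j) = (if u \<in> S then c u else 0)"
  by (simp add: axis_def if_distrib cong: if_cong)

lemma sum_axis: "(\<Sum>j\<in>S. axis u (1::'b::comm_ring_1) $ j) = (if u \<in> S then 1 else 0)"
  by (simp add: axis_def cong: if_cong)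

lemma sum_mult_transfer:
  fixes f :: "'b::comm_ring_1 ^ 'a::finite"
  shows "(\<Sum>j\<in>S. c j * (f - axis u 1 + axis v 1) $ j)
    = (\<Sum>j\<in>S. c j * f $ j) - (if u \<in> S then c u else 0) + (if v \<in> S then c v else 0)"
  by (simp add: right_diff_distrib distrib_left sum.distrib sum_subtractf sum_mult_axis)

lemma sum_transfer:
  fixes f :: "'b::comm_ring_1 ^ 'a::finite"
  shows "(\<Sum>j\<in>S. (f - axis u 1 + axis v 1) $ j)
    = (\<Sum>j\<in>S. f $ j) - (if u \<in> S then 1 else 0) + (if v \<in> S then 1 else 0)"
  by (simp add: sum.distrib sum_subtractf sum_axis)

lemma sum_add_axis:
  fixes f :: "'b::comm_ring_1 ^ 'a::finite"
  shows "(\<Sum>j\<in>S. (f + axis v 1) $ j) = (\<Sum>j\<in>S. f $ j) + (if v \<in> S then 1 else 0)"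
  by (simp add: sum.distrib sum_axis)

lemma tight_set_blocking_transfer:
  assumes "is_base r g" "\<not> is_base r (g - axis v 1 + axis u 1)"
  shows "\<exists>S. u \<in> S \<and> v \<notin> S \<and> tight r g S"
proof -
  have "(\<Sum>i\<in>UNIV. (g - axis v 1 + axis u 1) $ i) = r UNIV"
    using assms(1) sum_transfer[of g v u UNIV] by (simp add: is_base_def)
  then obtain S where S: "r S < (\<Sum>i\<in>S. (g - axis v 1 + axis u 1) $ i)"
    using assms(2) by (auto simp: is_base_def not_le)
  moreover have "(\<Sum>i\<in>S. g $ i) \<le> r S"
    using assms(1) by (simp add: is_base_def)
  ultimately show ?thesis
    using sum_transfer[of g v u S] by (intro exI[of _ S]) (auto simp: tight_def split: if_splits)
qed

lemma tight_set_blocking_increase: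
  assumes "rank_bounded r y" "\<not> rank_bounded r (y + axis i 1)"
  shows "\<exists>S. i \<in> S \<and> tight r y S"
proof -
  obtain S where "r S < (\<Sum>j\<in>S. (y + axis i 1) $ j)"
    using assms(2) by (auto simp: rank_bounded_def not_le)
  moreover have "(\<Sum>j\<in>S. y $ j) \<le> r S"
    using assms(1) by (simp add: rank_bounded_def)
  ultimately show ?thesis
    using sum_add_axis[of y i S] by (intro exI[of _ S]) (auto simp: tight_def split: if_splits)
qed

lemma base_exchange:
  assumes "submodular r" "is_base r f" "is_base r g" "g $ u < f $ u"
  shows "\<exists>v. f $ v < g $ v \<and> is_base r (g - axis v 1 + axis u 1)"
proof (rule ccontr)
  assume no_exchange: "\<not> ?thesis"
  define V where "V = {v. f $ v < g $ v}"
  have "\<forall>v\<in>V. \<exists>S. u \<in> S \<and> v \<notin> S \<and> tight r g S"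
    using tight_set_blocking_transfer[OF assms(3)] no_exchange by (simp add: V_def)
  then obtain S where S: "\<And>v. v \<in> V \<Longrightarrow> u \<in> S v \<and> v \<notin> S v \<and> tight r g (S v)"
    by metis
  \<comment> \<open>\<open>UNIV\<close> keeps the family nonempty when \<open>V = {}\<close>.\<close>
  define T where "T = \<Inter> (insert UNIV (S ` V))"
  have "tight r g T"
    using tight_Inter_Union[OF assms(1), of g "insert UNIV (S ` V)"] S assms(3)
    by (simp add: T_def is_base_iff_tight)
  moreover have "(\<Sum>i\<in>T. g $ i) < (\<Sum>i\<in>T. f $ i)"
  proof (rule sum_strict_mono_ex1)
    have "i \<notin> T" if "i \<in> V" for i
      using S[OF that] that by (auto simp: T_def)
    then show "\<forall>i\<in>T. g $ i \<le> f $ i"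
      unfolding V_def by (meson mem_Collect_eq not_le)
    show "\<exists>i\<in>T. g $ i < f $ i"
      using S assms(4) by (auto simp: T_def)
  qed simp
  moreover have "(\<Sum>i\<in>T. f $ i) \<le> r T"
    using assms(2) by (simp add: is_base_def)
  ultimately show False
    by (simp add: tight_def)
qed

lemma rank_bounded_increase:
  assumes "submodular r" "rank_bounded r y" "(\<Sum>i\<in>UNIV. y $ i) < r UNIV"
  shows "\<exists>i. rank_bounded r (y + axis i 1)"
proof (rule ccontr)
  assume "\<not> ?thesis"
  then obtain S where S: "\<And>i. i \<in> S i \<and> tight r y (S i)"
    using tight_set_blocking_increase[OF assms(2)] by metis
  then have "tight r y (\<Union> (range S))"
    using tight_Inter_Union[OF assms(1,2), of "range S"] by simp
  moreover have "\<Union> (range S) = UNIV"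
    using S by blast
  ultimately show False
    using assms(3) by (simp add: tight_def)
qed

lemma rank_bounded_le_base:
  assumes "submodular r" "rank_bounded r y"
  shows "\<exists>f. is_base r f \<and> (\<forall>i. y $ i \<le> f $ i)"
proof -
  obtain n where "r UNIV - (\<Sum>i\<in>UNIV. y $ i) = int n"
    using assms(2) by (metis rank_bounded_def diff_ge_0_iff_ge zero_le_imp_eq_int)
  with assms(2) show ?thesis
  proof (induction n arbitrary: y)
    case 0
    then show ?case
      by (auto simp: is_base_def rank_bounded_def)
  next
    case (Suc n)
    then obtain i where "rank_bounded r (y + axis i 1)"
      using rank_bounded_increase[OF assms(1)] by fastforce
    moreover have "r UNIV - (\<Sum>j\<in>UNIV. (y + axis i 1) $ j) = int n"
      using Suc.prems(2) sum_add_axis[of y i UNIV] by simp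
    ultimately obtain f where "is_base r f" "\<forall>j. (y + axis i 1) $ j \<le> f $ j"
      using Suc.IH by blast
    moreover have "y $ j \<le> (y + axis i 1) $ j" for j
      by (simp add: axis_def)
    ultimately show ?case
      by (meson order_trans)
  qed
qed

definition active_dominates ::
    "('a::{finite,linorder} set \<Rightarrow> int) \<Rightarrow> (int, 'a) vec \<Rightarrow> (int, 'a) vec \<Rightarrow> bool" where
  "active_dominates r f x \<longleftrightarrow>
     is_base r f \<and> (\<forall>i. x $ i \<le> f $ i) \<and> (\<forall>i. x $ i < f $ i \<longrightarrow> i \<in> active_set r f)"

lemma active_dominates_first_difference:
  assumes "submodular r" "active_dominates r f x" "active_dominates r g x"
    and "\<forall>j<m. f $ j = g $ j"
  shows "\<not> g $ m < f $ m"
proof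
  assume "g $ m < f $ m"
  moreover have "is_base r f" "is_base r g"
    using assms(2,3) by (simp_all add: active_dominates_def)
  ultimately obtain v where v: "f $ v < g $ v" "is_base r (g - axis v 1 + axis m 1)"
    using base_exchange[OF assms(1)] by blast
  have "m < v"
    using v(1) \<open>g $ m < f $ m\<close> assms(4) by (metis not_less_iff_gr_or_eq)
  have "x $ v < g $ v"
    using v(1) assms(2) by (auto simp: active_dominates_def intro: le_less_trans)
  then have "v \<in> active_set r g"
    using assms(3) by (simp add: active_dominates_def)
  then show False
    using \<open>m < v\<close> v(2) by (auto simp: active_set_def internally_active_def transfer_possible_def)
qed

lemma active_dominates_unique:
  assumes "submodular r" "active_dominates r f x" "active_dominates r g x"
  shows "f = g"
proof (rule ccontr)
  assume "f \<noteq> g"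
  define m where "m = Min {j. f $ j \<noteq> g $ j}"
  have "f $ m \<noteq> g $ m"
    using \<open>f \<noteq> g\<close> Min_in[of "{j. f $ j \<noteq> g $ j}"] by (auto simp: m_def vec_eq_iff)
  moreover have "\<forall>j<m. f $ j = g $ j"
    unfolding m_def using Min_le[of "{j. f $ j \<noteq> g $ j}"] by (meson finite leD mem_Collect_eq)
  ultimately show False
    using active_dominates_first_difference[OF assms(1,2,3), of m]
      active_dominates_first_difference[OF assms(1,3,2), of m]
    by (auto simp: neq_iff)
qed

lemma ex_max_bounded_int:
  fixes \<Phi> :: "'b \<Rightarrow> int"
  assumes "P a" "\<And>y. P y \<Longrightarrow> \<Phi> y \<le> b"
  shows "\<exists>y. P y \<and> (\<forall>z. P z \<longrightarrow> \<Phi> z \<le> \<Phi> y)"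
proof -
  obtain y where "P y" "\<forall>z. P z \<longrightarrow> nat (b - \<Phi> y) \<le> nat (b - \<Phi> z)"
    using ex_has_least_nat[of P a "\<lambda>y. nat (b - \<Phi> y)"] assms(1) by blast
  moreover have "\<Phi> z \<le> \<Phi> y" if "P z" for z
    using assms(2)[OF that] \<open>\<forall>z. P z \<longrightarrow> nat (b - \<Phi> y) \<le> nat (b - \<Phi> z)\<close> that
    by (auto simp: nat_le_eq_zle)
  ultimately show ?thesis
    by blast
qed

lemma active_dominates_exists:
  assumes "submodular r" "rank_bounded r x"
  shows "\<exists>f. active_dominates r f x"
proof -
  \<comment> \<open>\<open>w\<close> is strictly decreasing, so transferring a unit to a smaller element increases \<open>\<Phi>\<close>.\<close>
  define w :: "'a \<Rightarrow> int" where "w i = int (card {j. i < j})" for i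
  define \<Phi> where "\<Phi> f = (\<Sum>i\<in>UNIV. w i * f $ i)" for f
  define B where "B f \<longleftrightarrow> is_base r f \<and> (\<forall>i. x $ i \<le> f $ i)" for f
  define d where "d = r UNIV - (\<Sum>i\<in>UNIV. x $ i)"
  have "\<Phi> f \<le> (\<Sum>i\<in>UNIV. w i * (x $ i + d))" if "B f" for f
  proof -
    have "f $ i - x $ i \<le> (\<Sum>j\<in>UNIV. f $ j - x $ j)" for i
      by (rule member_le_sum) (use that in \<open>auto simp: B_def\<close>)
    moreover have "(\<Sum>j\<in>UNIV. f $ j - x $ j) = d"
      using that by (simp add: B_def d_def is_base_def sum_subtractf)
    ultimately have "f $ i \<le> x $ i + d" for i
      by (metis diff_le_eq add.commute)
    then show ?thesis
      unfolding \<Phi>_def by (intro sum_mono mult_left_mono) (auto simp: w_def)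
  qed
  moreover obtain f0 where "B f0"
    using rank_bounded_le_base[OF assms] by (auto simp: B_def)
  ultimately obtain f where f: "B f" and f_max: "\<And>g. B g \<Longrightarrow> \<Phi> g \<le> \<Phi> f"
    using ex_max_bounded_int[of B f0 \<Phi>] by blast
  have "i \<in> active_set r f" if "x $ i < f $ i" for i
  proof (rule ccontr)
    assume "i \<notin> active_set r f"
    then obtain v where "v < i" and base: "is_base r (f - axis i 1 + axis v 1)"
      by (auto simp: active_set_def internally_active_def transfer_possible_def)
    have "x $ j \<le> (f - axis i 1 + axis v 1) $ j" for j
      using f \<open>x $ i < f $ i\<close> by (auto simp: B_def axis_def intro: add_increasing2)
    then have "\<Phi> (f - axis i 1 + axis v 1) \<le> \<Phi> f"
      using f_max base by (simp add: B_def)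
    moreover have "w i < w v"
      unfolding w_def using \<open>v < i\<close> by (auto intro!: psubset_card_mono)
    ultimately show False
      using sum_mult_transfer[of w f i v UNIV] by (simp add: \<Phi>_def)
  qed
  with f show ?thesis
    by (auto simp: active_dominates_def B_def)
qed

lemma sum_components_eq_inner:
  "(\<Sum>i\<in>S. p $ i) = inner (\<chi> i. of_bool (i \<in> S)) (p :: real ^ 'n)"
  by (simp add: inner_vec_def)

lemma convex_sum_components_le: "convex {p :: real ^ 'n. (\<Sum>i\<in>S. p $ i) \<le> c}"
  using convex_halfspace_le by (simp add: sum_components_eq_inner)

lemma convex_sum_components_eq: "convex {p :: real ^ 'n. (\<Sum>i\<in>S. p $ i) = c}"
  using convex_hyperplane by (simp add: sum_components_eq_inner)

lemma convex_component_le: "convex {p :: real ^ 'n. p $ j \<le> c}"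
  using convex_sum_components_le[of "{j}"] by simp

lemma convex_component_eq: "convex {p :: real ^ 'n. p $ j = c}"
  using convex_sum_components_eq[of "{j}"] by simp

lemma nabla_eq:
  "nabla S = {q. (\<forall>j. q $ j \<le> 0) \<and> (\<forall>j. j \<notin> S \<longrightarrow> q $ j = 0) \<and> (\<Sum>j\<in>UNIV. q $ j) = -1}"
  (is "_ = ?C")
proof
  have "?C = (\<Inter>j. {q. q $ j \<le> 0}) \<inter> (\<Inter>j\<in>-S. {q. q $ j = 0}) \<inter> {q. (\<Sum>j\<in>UNIV. q $ j) = -1}"
    by auto
  then have "convex ?C"
    by (simp add: convex_Int convex_INT convex_component_le convex_component_eq
        convex_sum_components_eq)
  moreover have "(\<lambda>i. - axis i 1) ` S \<subseteq> ?C"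
    by (auto simp: axis_def sum_negf cong: if_cong)
  ultimately show "nabla S \<subseteq> ?C"
    unfolding nabla_def by (intro hull_minimal)
next
  show "?C \<subseteq> nabla S"
  proof
    fix q :: "real ^ 'a" assume q: "q \<in> ?C"
    have "(\<Sum>i\<in>S. q $ i) = (\<Sum>i\<in>UNIV. q $ i)"
      using q by (intro sum.mono_neutral_left) auto
    then have "(\<Sum>i\<in>S. - q $ i) = 1"
      using q by (simp add: sum_negf)
    then have "(\<Sum>i\<in>S. (- q $ i) *\<^sub>R (- axis i 1)) \<in> nabla S"
      unfolding nabla_def using q
      by (intro convex_sum[OF finite convex_convex_hull]) (auto intro: hull_inc)
    moreover have "(\<Sum>i\<in>S. (- q $ i) *\<^sub>R (- axis i 1)) = q"
    unfolding vec_eq_iff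
    proof
      fix j
      have "(\<Sum>i\<in>S. (- q $ i) *\<^sub>R (- axis i 1 :: real ^ 'a)) $ j = (\<Sum>i\<in>S. if i = j then q $ j else 0)"
        unfolding sum_component by (rule sum.cong) (auto simp: axis_def)
      then show "(\<Sum>i\<in>S. (- q $ i) *\<^sub>R (- axis i 1)) $ j = q $ j"
        using q by auto
    qed
    ultimately show "q \<in> nabla S"
      by simp
  qed
qed

lemma base_polytope_subset:
  "base_polytope r \<subseteq> {p. (\<forall>S. (\<Sum>i\<in>S. p $ i) \<le> r S) \<and> (\<Sum>i\<in>UNIV. p $ i) = r UNIV}"
  (is "_ \<subseteq> ?C")
proof -
  have "?C = (\<Inter>S. {p. (\<Sum>i\<in>S. p $ i) \<le> r S}) \<inter> {p. (\<Sum>i\<in>UNIV. p $ i) = r UNIV}"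
    by auto
  then have "convex ?C"
    by (simp add: convex_Int convex_INT convex_sum_components_le convex_sum_components_eq)
  moreover have "real_vec ` {f. is_base r f} \<subseteq> ?C"
    by (auto simp: real_vec_def is_base_def simp flip: of_int_sum)
  ultimately show ?thesis
    unfolding base_polytope_def by (intro hull_minimal)
qed

lemma real_vec_in_shifted_nabla_iff:
  fixes x f :: "int ^ 'a::finite"
  assumes "A \<noteq> {}"
  shows "(\<exists>q. real_vec x = real_vec f + real t *\<^sub>R q \<and> q \<in> nabla A) \<longleftrightarrow>
    (\<forall>i. x $ i \<le> f $ i) \<and> (\<forall>i. i \<notin> A \<longrightarrow> x $ i = f $ i)
    \<and> (\<Sum>i\<in>UNIV. x $ i) = (\<Sum>i\<in>UNIV. f $ i) - int t"
    (is "?shift \<longleftrightarrow> ?le \<and> ?out \<and> ?sum")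
proof
  assume ?shift
  then obtain q where q: "q \<in> nabla A" and x: "\<And>i. x $ i = f $ i + real t * q $ i"
    by (auto simp: real_vec_def vec_eq_iff)
  have "real_of_int (x $ i) \<le> real_of_int (f $ i)" for i
    using x[of i] q by (simp add: nabla_eq mult_nonneg_nonpos)
  then have le: ?le
    by simp
  have "real_of_int (x $ i) = real_of_int (f $ i)" if "i \<notin> A" for i
    using x[of i] q that by (simp add: nabla_eq)
  then have out: ?out
    by simp
  have "real_of_int (\<Sum>i\<in>UNIV. x $ i) = (\<Sum>i\<in>UNIV. f $ i + real t * q $ i)"
    by (simp add: x)
  also have "\<dots> = real_of_int (\<Sum>i\<in>UNIV. f $ i) + real t * (\<Sum>i\<in>UNIV. q $ i)"
    by (simp add: sum.distrib sum_distrib_left)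
  also have "\<dots> = real_of_int ((\<Sum>i\<in>UNIV. f $ i) - int t)"
    using q by (simp add: nabla_eq)
  finally have ?sum
    by (simp only: of_int_eq_iff)
  with le out show "?le \<and> ?out \<and> ?sum"
    by blast
next
  assume "?le \<and> ?out \<and> ?sum"
  then have le: ?le and out: ?out and sum: ?sum
    by blast+
  show ?shift
  proof (cases "t = 0")
    case True
    have "(\<Sum>i\<in>UNIV. f $ i - x $ i) = 0"
      using sum True by (simp add: sum_subtractf)
    then have "x = f"
      using le by (simp add: sum_nonneg_eq_0_iff vec_eq_iff)
    moreover obtain a where "a \<in> A"
      using assms by blast
    then have "- axis a 1 \<in> nabla A"
      unfolding nabla_def by (intro hull_inc) auto
    ultimately show ?thesis
      using True by auto
  next
    case False
    define q where "q = (1 / real t) *\<^sub>R (real_vec x - real_vec f)"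
    have "(\<Sum>j\<in>UNIV. q $ j) = (real_of_int (\<Sum>j\<in>UNIV. x $ j) - (\<Sum>j\<in>UNIV. f $ j)) / real t"
      by (simp add: q_def real_vec_def sum_subtractf flip: sum_divide_distrib)
    then have "q \<in> nabla A"
      using le out sum False by (auto simp: nabla_eq q_def real_vec_def divide_nonpos_pos)
    moreover have "real_vec x = real_vec f + real t *\<^sub>R q"
      using False by (simp add: q_def)
    ultimately show ?thesis
      by blast
  qed
qed

lemma mem_lattice_points_iff:
  assumes "submodular r"
  shows "x \<in> {x. real_vec x \<in> {p + real t *\<^sub>R q | p q. p \<in> base_polytope r \<and> q \<in> nabla UNIV}}
    \<longleftrightarrow> rank_bounded r x \<and> (\<Sum>i\<in>UNIV. x $ i) = r UNIV - int t"
proof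
  assume "x \<in> {x. real_vec x \<in> {p + real t *\<^sub>R q | p q. p \<in> base_polytope r \<and> q \<in> nabla UNIV}}"
  then obtain p q where p: "p \<in> base_polytope r" and q: "q \<in> nabla UNIV"
    and x: "\<And>i. x $ i = p $ i + real t * q $ i"
    by (auto simp: real_vec_def vec_eq_iff)
  have sum_x: "real_of_int (\<Sum>i\<in>S. x $ i) = (\<Sum>i\<in>S. p $ i) + real t * (\<Sum>i\<in>S. q $ i)" for S
    by (simp add: x sum.distrib sum_distrib_left)
  have "rank_bounded r x"
    unfolding rank_bounded_def
  proof
    fix S
    have "real t * (\<Sum>i\<in>S. q $ i) \<le> 0"
      using q by (simp add: nabla_eq mult_nonneg_nonpos sum_nonpos)
    then have "real_of_int (\<Sum>i\<in>S. x $ i) \<le> (\<Sum>i\<in>S. p $ i)"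
      using sum_x[of S] by linarith
    also have "\<dots> \<le> r S"
      using p base_polytope_subset by blast
    finally show "(\<Sum>i\<in>S. x $ i) \<le> r S"
      by (simp only: of_int_le_iff)
  qed
  moreover have "(\<Sum>i\<in>UNIV. p $ i) = r UNIV" "(\<Sum>i\<in>UNIV. q $ i) = -1"
    using p q base_polytope_subset by (auto simp: nabla_eq)
  then have "real_of_int (\<Sum>i\<in>UNIV. x $ i) = real_of_int (r UNIV - int t)"
    using sum_x[of UNIV] by simp
  then have "(\<Sum>i\<in>UNIV. x $ i) = r UNIV - int t"
    by (simp only: of_int_eq_iff)
  ultimately show "rank_bounded r x \<and> (\<Sum>i\<in>UNIV. x $ i) = r UNIV - int t"
    by blast
next
  assume x: "rank_bounded r x \<and> (\<Sum>i\<in>UNIV. x $ i) = r UNIV - int t"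
  then obtain f where f: "is_base r f" "\<forall>i. x $ i \<le> f $ i"
    using rank_bounded_le_base[OF assms] by blast
  then have "\<exists>q. real_vec x = real_vec f + real t *\<^sub>R q \<and> q \<in> nabla UNIV"
    using x by (simp add: real_vec_in_shifted_nabla_iff is_base_def)
  moreover have "real_vec f \<in> base_polytope r"
    unfolding base_polytope_def using f(1) by (intro hull_inc) auto
  ultimately show "x \<in> {x. real_vec x \<in> {p + real t *\<^sub>R q | p q. p \<in> base_polytope r \<and> q \<in> nabla UNIV}}"
    by blast
qed

lemma min_in_active_set: "Min UNIV \<in> active_set r f"
  by (auto simp: active_set_def internally_active_def dest: Min_le[OF finite, of _ UNIV])

lemma is_base_and_mem_cell_iff:
  "is_base r f \<and> x \<in> {x. real_vec x \<in> {real_vec f + real t *\<^sub>R q | q. q \<in> nabla (active_set r f)}}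
    \<longleftrightarrow> active_dominates r f x \<and> (\<Sum>i\<in>UNIV. x $ i) = r UNIV - int t"
proof -
  have "active_set r f \<noteq> {}"
    using min_in_active_set by blast
  then show ?thesis
    by (auto simp: real_vec_in_shifted_nabla_iff active_dominates_def is_base_def
        order.order_iff_strict)
qed

lemma active_dominates_imp_rank_bounded:
  assumes "active_dominates r f x"
  shows "rank_bounded r x"
  unfolding rank_bounded_def
proof
  fix S
  have "(\<Sum>i\<in>S. x $ i) \<le> (\<Sum>i\<in>S. f $ i)"
    using assms by (intro sum_mono) (simp add: active_dominates_def)
  also have "\<dots> \<le> r S"
    using assms by (simp add: active_dominates_def is_base_def)
  finally show "(\<Sum>i\<in>S. x $ i) \<le> r S" .
qed

theorem mainTheorem15:
  fixes r :: "'a::{finite,linorder} set \<Rightarrow> int" and t :: nat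
  assumes "polymatroid r"
  shows "(\<forall>f g. is_base r f \<and> is_base r g \<and> f \<noteq> g \<longrightarrow>
            {x. real_vec x \<in> {real_vec f + real t *\<^sub>R q | q. q \<in> nabla (active_set r f)}} \<inter>
            {x. real_vec x \<in> {real_vec g + real t *\<^sub>R q | q. q \<in> nabla (active_set r g)}} = {})
       \<and> (\<Union>f\<in>{f. is_base r f}.
            {x. real_vec x \<in> {real_vec f + real t *\<^sub>R q | q. q \<in> nabla (active_set r f)}})
         = {x. real_vec x \<in> {p + real t *\<^sub>R q | p q. p \<in> base_polytope r \<and> q \<in> nabla UNIV}}"
proof -
  let ?cell = "\<lambda>f. {x. real_vec x \<in> {real_vec f + real t *\<^sub>R q | q. q \<in> nabla (active_set r f)}}"
  let ?lattice_points = "{x. real_vec x \<in> {p + real t *\<^sub>R q | p q. p \<in> base_polytope r \<and> q \<in> nabla UNIV}}"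
  have submod: "submodular r"
    using assms by (rule polymatroid_imp_submodular)
  note cell_iff = is_base_and_mem_cell_iff and lattice_points_iff = mem_lattice_points_iff[OF submod]
  show ?thesis
  proof (intro conjI allI impI set_eqI iffI)
    fix f g x
    assume "is_base r f \<and> is_base r g \<and> f \<noteq> g" and "x \<in> ?cell f \<inter> ?cell g"
    then show "x \<in> {}"
      using cell_iff active_dominates_unique[OF submod] by blast
  next
    fix x
    assume "x \<in> (\<Union>f\<in>{f. is_base r f}. ?cell f)"
    then show "x \<in> ?lattice_points"
      using cell_iff lattice_points_iff active_dominates_imp_rank_bounded by blast
  next
    fix x
    assume "x \<in> ?lattice_points"
    then obtain f where "active_dominates r f x" "(\<Sum>i\<in>UNIV. x $ i) = r UNIV - int t"
      using lattice_points_iff active_dominates_exists[OF submod] by blast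
    then show "x \<in> (\<Union>f\<in>{f. is_base r f}. ?cell f)"
      using cell_iff by blast
  qed simp
qed

end
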